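(* Let $1<p<\infty$, let $A$ be an index set, let $\Gamma$ be a set with weight function $w:\Gamma\to(0,\infty)$, and let $T:m^{p,\infty}(A)\to\ell^{p,\infty}(\Gamma,w)$ be a bounded linear operator. Then $T\chi_{\{\alpha\}}\in m^{p,\infty}(\Gamma,w)$ for all but countably many $\alpha\in A$.
   Context: For a set $\Gamma$ and $w:\Gamma\to(0,\infty)$, let $\mu(\sigma)=\sum_{\gamma\in\sigma}w(\gamma)$ on $\mathcal P(\Gamma)$; $\ell^{p,\infty}(\Gamma,w)$ is the space of functions $f$ on $\Gamma$ with $\|f\|=\sup_{c>0}c\,(\mu\{|f|>c\})^{1/p}<\infty$ (a Banach space under an equivalent norm), and $m^{p,\infty}(\Gamma,w)$ is its closed subspace generated by the characteristic functions $\chi_\sigma$ of sets $\sigma\subseteq\Gamma$ of finite $\mu$-measure. $\ell^{p,\infty}(A)$ and $m^{p,\infty}(A)$ denote these spaces with $w\equiv1$. *)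

theory Defs
  imports "HOL-Analysis.Analysis"
begin

definition wmu :: "('g \<Rightarrow> real) \<Rightarrow> 'g set \<Rightarrow> ennreal" where
  "wmu w S = (\<Sum>\<^sub>\<infinity> x\<in>S. ennreal (w x))"

text \<open>The p-th power of the weak-Lp quasinorm:
  (sup_c c mu{|f|>c}^(1/p))^p = sup_c c^p mu{|f|>c}.\<close>
definition wnorm_p :: "real \<Rightarrow> ('g \<Rightarrow> real) \<Rightarrow> ('g \<Rightarrow> real) \<Rightarrow> ennreal" where
  "wnorm_p p w f = (SUP c\<in>{0<..}. ennreal (c powr p) * wmu w {x. c < \<bar>f x\<bar>})"

definition lpinf :: "real \<Rightarrow> ('g \<Rightarrow> real) \<Rightarrow> ('g \<Rightarrow> real) set" where
  "lpinf p w = {f. wnorm_p p w f < \<infinity>}"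

definition simple_span :: "('g \<Rightarrow> real) \<Rightarrow> ('g \<Rightarrow> real) set" where
  "simple_span w = {g. \<exists>n (c :: nat \<Rightarrow> real) (S :: nat \<Rightarrow> 'g set).
      (\<forall>i<n. wmu w (S i) < \<infinity>) \<and> g = (\<lambda>x. \<Sum>i<n. c i * indicator (S i) x)}"

text \<open>The space m^{p,infinity}(Gamma,w): the closure of that span in l^{p,infinity}(Gamma,w)
  (closure w.r.t. the quasinorm topology, which coincides with the topology of the
  equivalent Banach norm).\<close>
definition mpinf :: "real \<Rightarrow> ('g \<Rightarrow> real) \<Rightarrow> ('g \<Rightarrow> real) set" where
  "mpinf p w = {f \<in> lpinf p w. \<forall>e>0. \<exists>g\<in>simple_span w. wnorm_p p w (\<lambda>x. f x - g x) < ennreal e}"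

text \<open>Bounded linear operator T from a subspace D (with weight v) into l^{p,infinity}(Gamma,w).
  Boundedness ||Tf|| <= K ||f|| is expressed with p-th powers.\<close>
definition bounded_linear_wk ::
  "real \<Rightarrow> ('a \<Rightarrow> real) \<Rightarrow> ('a \<Rightarrow> real) set \<Rightarrow> ('g \<Rightarrow> real) \<Rightarrow> (('a \<Rightarrow> real) \<Rightarrow> ('g \<Rightarrow> real)) \<Rightarrow> bool" where
  "bounded_linear_wk p v D w T \<longleftrightarrow>
     (\<forall>f\<in>D. T f \<in> lpinf p w) \<and>
     (\<forall>f\<in>D. \<forall>g\<in>D. T (\<lambda>x. f x + g x) = (\<lambda>y. T f y + T g y)) \<and>
     (\<forall>f\<in>D. \<forall>c. T (\<lambda>x. c * f x) = (\<lambda>y. c * T f y)) \<and>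
     (\<exists>K\<ge>0. \<forall>f\<in>D. wnorm_p p w (T f) \<le> ennreal (K powr p) * wnorm_p p v f)"

end

theory Submission
  imports Defs
begin

(* A function g in l^{p,oo}(Gamma,w) lies in m^{p,oo}(Gamma,w) as soon as, for every e > 0,
   only finitely many dyadic levels 2^(mp) mu{|g| > 2^m} reach e: quantizing g on
   {2^-M < |g| <= 2^M} then approximates it.  Each T chi_a has countable support, and the
   boundedness of T forces every point to lie in the support of only countably many T chi_a;
   so from uncountable families one can always pick finitely many members with pairwise
   disjoint supports.  If uncountably many T chi_a were outside m^{p,oo}, there would be an
   e > 0 and infinitely many levels m each reached by uncountably many T chi_a.  For L such
   levels m >= m0, take ceil(2^((m-m0)p)) disjointly supported a's at each level m with
   coefficient 2^-(m-m0): the resulting f has ||f||^p <= 4, while the pieces of T f exceed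
   2^m0 on disjoint sets, giving ||T f||^p >= L e, which is absurd for large L. *)

section \<open>The weighted measure and the weak norm\<close>

lemma wmu_mono: "A \<subseteq> B \<Longrightarrow> wmu w A \<le> wmu w B"
  unfolding wmu_def by (rule infsum_mono_neutral) (auto simp: nonneg_summable_on_complete)

lemma wmu_finite: "finite A \<Longrightarrow> wmu w A = (\<Sum>x\<in>A. ennreal (w x))"
  unfolding wmu_def by simp

lemma wmu_ge_weight: "x \<in> A \<Longrightarrow> ennreal (w x) \<le> wmu w A"
  using wmu_mono[of "{x}" A w] by (simp add: wmu_finite)

lemma wmu_UN_disjoint:
  assumes "finite I" "\<And>i j. i \<in> I \<Longrightarrow> j \<in> I \<Longrightarrow> i \<noteq> j \<Longrightarrow> A i \<inter> A j = {}"
  shows "wmu w (\<Union>i\<in>I. A i) = (\<Sum>i\<in>I. wmu w (A i))"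
  unfolding wmu_def
  by (rule sum_infsum[symmetric]) (use assms in \<open>auto simp: nonneg_summable_on_complete\<close>)

lemma countable_if_countable_levels:
  fixes P :: "real \<Rightarrow> 'a \<Rightarrow> bool"
  assumes "\<And>x. x \<in> S \<Longrightarrow> \<exists>e>0. P e x"
    and "\<And>e e' x. 0 < e \<Longrightarrow> e \<le> e' \<Longrightarrow> P e' x \<Longrightarrow> P e x"
    and "\<And>e. 0 < e \<Longrightarrow> countable {x \<in> S. P e x}"
  shows "countable S"
proof -
  have "S \<subseteq> (\<Union>n::nat. {x \<in> S. P (1 / Suc n) x})"
  proof
    fix x assume "x \<in> S"
    then obtain e where "0 < e" "P e x" using assms(1) by blast
    moreover obtain n :: nat where "1 / Suc n < e"
      using \<open>0 < e\<close> reals_Archimedean by (auto simp: inverse_eq_divide)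
    ultimately show "x \<in> (\<Union>n. {x \<in> S. P (1 / Suc n) x})"
      using assms(2)[of "1 / Suc n" e x] \<open>x \<in> S\<close> by auto
  qed
  moreover have "countable (\<Union>n::nat. {x \<in> S. P (1 / Suc n) x})"
    by (intro countable_UN assms(3)) auto
  ultimately show ?thesis by (rule countable_subset)
qed

lemma countable_if_wmu_finite:
  assumes pos: "\<forall>x. 0 < w x" and fin: "wmu w S < \<infinity>"
  shows "countable S"
proof (rule countable_if_countable_levels[of S "\<lambda>e x. e < w x"])
  fix e :: real assume "0 < e"
  show "countable {x \<in> S. e < w x}"
  proof (rule countable_finite, rule ccontr)
    assume "infinite {x \<in> S. e < w x}"
    hence "wmu w {x \<in> S. e < w x} = \<infinity>"
      unfolding wmu_def
      by (intro infsum_superconst_infinite_ennreal[where b="ennreal e"])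
         (use \<open>0 < e\<close> in \<open>auto intro!: ennreal_leI\<close>)
    moreover have "wmu w {x \<in> S. e < w x} \<le> wmu w S" by (intro wmu_mono) auto
    ultimately show False using fin by simp
  qed
next
  fix x assume "x \<in> S"
  show "\<exists>e>0. e < w x" using pos by (intro exI[of _ "w x / 2"]) auto
qed auto

lemma wnorm_p_ge:
  "0 < c \<Longrightarrow> ennreal (c powr p) * wmu w {x. c < \<bar>f x\<bar>} \<le> wnorm_p p w f"
  unfolding wnorm_p_def by (rule SUP_upper) auto

lemma wnorm_p_ge_weight:
  assumes "0 < c" "c < \<bar>f x\<bar>"
  shows "ennreal (c powr p) * ennreal (w x) \<le> wnorm_p p w f"
proof -
  have "ennreal (c powr p) * ennreal (w x) \<le> ennreal (c powr p) * wmu w {x. c < \<bar>f x\<bar>}"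
    using assms(2) by (intro mult_left_mono wmu_ge_weight) auto
  also have "\<dots> \<le> wnorm_p p w f" by (rule wnorm_p_ge[OF assms(1)])
  finally show ?thesis .
qed

lemma wnorm_p_leI:
  "(\<And>c. 0 < c \<Longrightarrow> ennreal (c powr p) * wmu w {x. c < \<bar>f x\<bar>} \<le> B) \<Longrightarrow> wnorm_p p w f \<le> B"
  unfolding wnorm_p_def by (rule SUP_least) auto

lemma wmu_level_finite:
  assumes "f \<in> lpinf p w" "0 < c"
  shows "wmu w {x. c < \<bar>f x\<bar>} < \<infinity>"
proof -
  have "ennreal (c powr p) * wmu w {x. c < \<bar>f x\<bar>} < \<infinity>"
    using wnorm_p_ge[OF assms(2), of p w f] assms(1) unfolding lpinf_def by auto
  thus ?thesis using assms(2) by (auto simp: ennreal_mult_less_top top.not_eq_extremum)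
qed

lemma countable_support_lpinf:
  assumes "\<forall>x. 0 < w x" "f \<in> lpinf p w"
  shows "countable {x. f x \<noteq> 0}"
proof (rule countable_if_countable_levels[of _ "\<lambda>e x. e < \<bar>f x\<bar>"])
  fix e :: real assume "0 < e"
  have "wmu w {x \<in> {x. f x \<noteq> 0}. e < \<bar>f x\<bar>} \<le> wmu w {x. e < \<bar>f x\<bar>}"
    by (rule wmu_mono) auto
  also have "\<dots> < \<infinity>" using assms(2) \<open>0 < e\<close> by (rule wmu_level_finite)
  finally show "countable {x \<in> {x. f x \<noteq> 0}. e < \<bar>f x\<bar>}"
    using assms(1) by (rule countable_if_wmu_finite[rotated])
next
  fix x assume "x \<in> {x. f x \<noteq> 0}"
  thus "\<exists>e>0. e < \<bar>f x\<bar>" by (intro exI[of _ "\<bar>f x\<bar> / 2"]) auto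
qed auto

section \<open>Simple and finitely supported functions\<close>

lemma simple_span_if_finite_range:
  assumes "finite (range h)" "wmu w {x. h x \<noteq> 0} < \<infinity>"
  shows "h \<in> simple_span w"
proof -
  define V where "V = range h - {0}"
  obtain v where v: "bij_betw v {..<card V} V"
    using ex_bij_betw_nat_finite[of V] assms(1) by (auto simp: V_def lessThan_atLeast0)
  have "h x = (\<Sum>y\<in>V. y * indicator (h -` {y}) x)" for x
  proof -
    have "(\<Sum>y\<in>V. y * indicator (h -` {y}) x) = (\<Sum>y\<in>V. if y = h x then h x else 0)"
      by (rule sum.cong) (auto simp: indicator_def)
    also have "\<dots> = h x" using assms(1) by (auto simp: V_def)
    finally show ?thesis by simp
  qed
  also have "(\<Sum>y\<in>V. y * indicator (h -` {y}) x) = (\<Sum>i<card V. v i * indicator (h -` {v i}) x)" for x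
    using sum.reindex_bij_betw[OF v, of "\<lambda>y. y * indicator (h -` {y}) x"] by simp
  finally have "h = (\<lambda>x. \<Sum>i<card V. v i * indicator (h -` {v i}) x)" by blast
  moreover have "wmu w (h -` {v i}) < \<infinity>" if "i < card V" for i
  proof -
    have "v i \<noteq> 0" using bij_betwE[OF v] that by (auto simp: V_def)
    hence "wmu w (h -` {v i}) \<le> wmu w {x. h x \<noteq> 0}" by (intro wmu_mono) auto
    with assms(2) show ?thesis by simp
  qed
  ultimately show ?thesis unfolding simple_span_def
    by (intro CollectI exI[of _ "card V"] exI[of _ v] exI[of _ "\<lambda>i. h -` {v i}"]) blast
qed

lemma wnorm_p_count_leI:
  assumes fin: "finite {x. f x \<noteq> 0}"
    and bound: "\<And>t. 0 < t \<Longrightarrow> t powr p * card {x. t < \<bar>f x\<bar>} \<le> B"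
  shows "wnorm_p p (\<lambda>_. 1) f \<le> ennreal B"
proof (rule wnorm_p_leI)
  fix t :: real assume "0 < t"
  hence "finite {x. t < \<bar>f x\<bar>}" by (auto intro: finite_subset[OF _ fin])
  hence "ennreal (t powr p) * wmu (\<lambda>_. 1) {x. t < \<bar>f x\<bar>} = ennreal (t powr p * card {x. t < \<bar>f x\<bar>})"
    by (simp add: wmu_finite ennreal_mult' ennreal_of_nat_eq_real_of_nat)
  also have "\<dots> \<le> ennreal B" using bound[OF \<open>0 < t\<close>] by (rule ennreal_leI)
  finally show "ennreal (t powr p) * wmu (\<lambda>_. 1) {x. t < \<bar>f x\<bar>} \<le> ennreal B" .
qed

lemma mpinf_if_finite_support:
  assumes fin: "finite {x. f x \<noteq> 0}" and "0 \<le> p"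
  shows "f \<in> mpinf p (\<lambda>_. 1)"
proof -
  define M where "M = {x. f x \<noteq> 0}"
  define S where "S = (\<Sum>x\<in>M. \<bar>f x\<bar>)"
  have "wnorm_p p (\<lambda>_. 1) f \<le> ennreal (S powr p * card M)"
  proof (rule wnorm_p_count_leI[OF fin])
    fix t :: real assume "0 < t"
    show "t powr p * card {x. t < \<bar>f x\<bar>} \<le> S powr p * card M"
    proof (cases "{x. t < \<bar>f x\<bar>} = {}")
      case False
      then obtain x where x: "t < \<bar>f x\<bar>" by auto
      with \<open>0 < t\<close> have "\<bar>f x\<bar> \<le> S"
        unfolding S_def M_def using fin by (intro member_le_sum) auto
      hence "t powr p \<le> S powr p" using x \<open>0 < t\<close> \<open>0 \<le> p\<close> by (intro powr_mono2) auto
      moreover have "card {x. t < \<bar>f x\<bar>} \<le> card M"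
        using fin \<open>0 < t\<close> unfolding M_def by (intro card_mono) auto
      ultimately show ?thesis by (intro mult_mono) auto
    qed (simp add: S_def)
  qed
  hence "f \<in> lpinf p (\<lambda>_. 1)" unfolding lpinf_def using le_less_trans by fastforce
  moreover have "f \<in> simple_span (\<lambda>_. 1)"
  proof (rule simple_span_if_finite_range)
    have "range f \<subseteq> insert 0 (f ` M)" by (auto simp: M_def)
    thus "finite (range f)" using fin finite_subset by (auto simp: M_def)
  qed (use fin in \<open>simp add: wmu_finite of_nat_less_top\<close>)
  moreover have "wnorm_p p (\<lambda>_. 1) (\<lambda>x. f x - f x) = 0"
    unfolding wnorm_p_def by (simp add: wmu_finite)
  ultimately show ?thesis unfolding mpinf_def by (auto intro!: bexI[of _ f])
qed

lemma sum_indicator_singleton_image: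
  assumes "finite F" "inj_on b F" "i \<in> F"
  shows "(\<Sum>j\<in>F. a j * indicator {b j} (b i)) = (a i :: real)"
proof -
  have "(\<Sum>j\<in>F. a j * indicator {b j} (b i)) = (\<Sum>j\<in>F. if j = i then a i else 0)"
    using assms(2,3) by (intro sum.cong) (auto simp: indicator_def dest: inj_onD)
  also have "\<dots> = a i" using assms(1,3) by simp
  finally show ?thesis .
qed

lemma sum_indicator_singleton_not_image:
  "x \<notin> b ` F \<Longrightarrow> (\<Sum>j\<in>F. a j * indicator {b j} x) = (0::real)"
  by (rule sum.neutral) (auto simp: indicator_def)

lemma finite_support_sum_indicator_singleton:
  assumes "finite F"
  shows "finite {x. (\<Sum>j\<in>F. a j * indicator {b j} x) \<noteq> (0::real)}"
proof (rule finite_subset[of _ "b ` F"])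
  show "{x. (\<Sum>j\<in>F. a j * indicator {b j} x) \<noteq> 0} \<subseteq> b ` F"
    using sum_indicator_singleton_not_image[of _ b F a] by blast
qed (use assms in simp)

lemma wnorm_p_count_sum_indicator_le:
  assumes "finite S" "inj_on b S"
    and bound: "\<And>t. 0 < t \<Longrightarrow> t powr p * card {s\<in>S. t < \<bar>a s\<bar>} \<le> B"
  shows "wnorm_p p (\<lambda>_. 1) (\<lambda>x. \<Sum>s\<in>S. a s * indicator {b s} x) \<le> ennreal B"
proof (rule wnorm_p_count_leI[OF finite_support_sum_indicator_singleton[OF assms(1)]])
  fix t :: real assume "0 < t"
  have "{x. t < \<bar>\<Sum>s\<in>S. a s * indicator {b s} x\<bar>} = b ` {s\<in>S. t < \<bar>a s\<bar>}"
  proof (intro equalityI subsetI)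
    fix x assume x: "x \<in> {x. t < \<bar>\<Sum>s\<in>S. a s * indicator {b s} x\<bar>}"
    have "x \<in> b ` S"
    proof (rule ccontr)
      assume "x \<notin> b ` S"
      hence "(\<Sum>s\<in>S. a s * indicator {b s} x) = 0" by (rule sum_indicator_singleton_not_image)
      thus False using x \<open>0 < t\<close> by simp
    qed
    then obtain s where "s \<in> S" "x = b s" by blast
    thus "x \<in> b ` {s\<in>S. t < \<bar>a s\<bar>}"
      using x sum_indicator_singleton_image[OF assms(1,2)] by auto
  next
    fix x assume "x \<in> b ` {s\<in>S. t < \<bar>a s\<bar>}"
    thus "x \<in> {x. t < \<bar>\<Sum>s\<in>S. a s * indicator {b s} x\<bar>}"
      using sum_indicator_singleton_image[OF assms(1,2)] by auto
  qed
  moreover have "card (b ` {s\<in>S. t < \<bar>a s\<bar>}) = card {s\<in>S. t < \<bar>a s\<bar>}"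
    by (rule card_image) (use assms(2) in \<open>auto intro: inj_on_subset\<close>)
  ultimately show "t powr p * card {x. t < \<bar>\<Sum>s\<in>S. a s * indicator {b s} x\<bar>} \<le> B"
    using bound[OF \<open>0 < t\<close>] by simp
qed

lemma wnorm_p_count_sum_indicator_le_card:
  assumes "finite S" "inj_on b S" "0 \<le> p" "\<And>s. s \<in> S \<Longrightarrow> \<bar>a s\<bar> \<le> 1"
  shows "wnorm_p p (\<lambda>_. 1) (\<lambda>x. \<Sum>s\<in>S. a s * indicator {b s} x) \<le> ennreal (card S)"
proof (rule wnorm_p_count_sum_indicator_le[OF assms(1,2)])
  fix t :: real assume "0 < t"
  show "t powr p * card {s \<in> S. t < \<bar>a s\<bar>} \<le> card S"
  proof (cases "t < 1")
    case True
    have "t powr p \<le> 1" using \<open>0 < t\<close> True \<open>0 \<le> p\<close> by (intro powr_le1) auto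
    moreover have "card {s \<in> S. t < \<bar>a s\<bar>} \<le> card S" using assms(1) by (intro card_mono) auto
    ultimately show ?thesis using mult_mono[of "t powr p" 1] by fastforce
  next
    case False
    hence "{s \<in> S. t < \<bar>a s\<bar>} = {}" using assms(4) by force
    thus ?thesis by (simp only: card.empty of_nat_0 mult_zero_right of_nat_0_le_iff)
  qed
qed

lemma mpinf_sum_indicator_singleton:
  "0 \<le> p \<Longrightarrow> finite F \<Longrightarrow> (\<lambda>x. \<Sum>i\<in>F. a i * indicator {b i} x) \<in> mpinf p (\<lambda>_. 1)"
  by (rule mpinf_if_finite_support[OF finite_support_sum_indicator_singleton])

lemma bounded_linear_wk_sum_indicator:
  assumes "0 \<le> p" and T: "bounded_linear_wk p (\<lambda>_. 1) (mpinf p (\<lambda>_. 1)) w T" and "finite F"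
  shows "T (\<lambda>x. \<Sum>i\<in>F. a i * indicator {b i} x) = (\<lambda>y. \<Sum>i\<in>F. a i * T (indicator {b i}) y)"
proof -
  have add: "\<And>f g. f \<in> mpinf p (\<lambda>_. 1) \<Longrightarrow> g \<in> mpinf p (\<lambda>_. 1) \<Longrightarrow>
      T (\<lambda>x. f x + g x) = (\<lambda>y. T f y + T g y)"
    and hom: "\<And>f c. f \<in> mpinf p (\<lambda>_. 1) \<Longrightarrow> T (\<lambda>x. c * f x) = (\<lambda>y. c * T f y)"
    using T unfolding bounded_linear_wk_def by blast+
  have single: "(\<lambda>x. c * indicator {y} x) \<in> mpinf p (\<lambda>_. 1)" for c :: real and y
    by (rule mpinf_if_finite_support[OF finite_subset[of _ "{y}"]])
       (use \<open>0 \<le> p\<close> in \<open>auto split: split_indicator\<close>)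
  show ?thesis
    using \<open>finite F\<close>
  proof (induction F rule: finite_induct)
    case empty
    show ?case using hom[OF single[of 0], of 0] by simp
  next
    case (insert i F)
    have scale: "T (\<lambda>x. a i * indicator {b i} x) = (\<lambda>y. a i * T (indicator {b i}) y)"
      using hom[of "indicator {b i}" "a i"] single[of 1 "b i"] by simp
    have "T (\<lambda>x. \<Sum>j\<in>insert i F. a j * indicator {b j} x)
        = T (\<lambda>x. a i * indicator {b i} x + (\<Sum>j\<in>F. a j * indicator {b j} x))"
      by (simp only: sum.insert[OF insert.hyps])
    also have "\<dots> = (\<lambda>y. T (\<lambda>x. a i * indicator {b i} x) y + T (\<lambda>x. \<Sum>j\<in>F. a j * indicator {b j} x) y)"
      using add[OF single mpinf_sum_indicator_singleton[OF \<open>0 \<le> p\<close> insert.hyps(1)]] by simp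
    also have "\<dots> = (\<lambda>y. \<Sum>j\<in>insert i F. a j * T (indicator {b j}) y)"
      by (simp only: scale insert.IH sum.insert[OF insert.hyps])
    finally show ?case .
  qed
qed

section \<open>Dyadic levels and approximation by simple functions\<close>

definition dyadic_level :: "real \<Rightarrow> ('g \<Rightarrow> real) \<Rightarrow> ('g \<Rightarrow> real) \<Rightarrow> int \<Rightarrow> ennreal" where
  "dyadic_level p w g m = ennreal ((2 powr m) powr p) * wmu w {x. 2 powr m < \<bar>g x\<bar>}"

lemma level_le_dyadic_level:
  assumes "0 < c" "0 \<le> p"
  shows "ennreal (c powr p) * wmu w {x. c < \<bar>g x\<bar>}
    \<le> ennreal (2 powr p) * dyadic_level p w g \<lfloor>log 2 c\<rfloor>"
proof -
  define m where "m = \<lfloor>log 2 c\<rfloor>"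
  have "2 powr m \<le> 2 powr (log 2 c)" "2 powr (log 2 c) < 2 powr (m + 1)"
    unfolding m_def by (subst powr_le_cancel_iff powr_less_cancel_iff; linarith)+
  hence m: "2 powr m \<le> c" "c < 2 * 2 powr m" using \<open>0 < c\<close> by (simp_all add: powr_add)
  have "c powr p \<le> (2 * 2 powr m) powr p" using m \<open>0 < c\<close> \<open>0 \<le> p\<close> by (intro powr_mono2) auto
  hence "ennreal (c powr p) \<le> ennreal (2 powr p) * ennreal ((2 powr m) powr p)"
    by (simp add: powr_mult ennreal_mult'[symmetric] ennreal_leI)
  moreover have "wmu w {x. c < \<bar>g x\<bar>} \<le> wmu w {x. 2 powr m < \<bar>g x\<bar>}"
    using m by (intro wmu_mono) auto
  ultimately show ?thesis
    unfolding dyadic_level_def m_def[symmetric] mult.assoc[symmetric] by (rule mult_mono) auto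
qed

definition quantize :: "real \<Rightarrow> real \<Rightarrow> real \<Rightarrow> real" where
  "quantize a b y = (if a < \<bar>y\<bar> \<and> \<bar>y\<bar> \<le> b then a * \<lfloor>y / a\<rfloor> else 0)"

lemma quantize_error:
  assumes "0 < a"
  shows "\<bar>y - quantize a b y\<bar> \<le> \<bar>y\<bar>" and "a < \<bar>y - quantize a b y\<bar> \<Longrightarrow> b < \<bar>y\<bar>"
proof -
  have "0 \<le> y - a * \<lfloor>y / a\<rfloor>" "y - a * \<lfloor>y / a\<rfloor> < a"
    using floor_divide_lower[OF assms, of y] floor_divide_upper[OF assms, of y]
    by (simp_all add: algebra_simps)
  thus "\<bar>y - quantize a b y\<bar> \<le> \<bar>y\<bar>" and "a < \<bar>y - quantize a b y\<bar> \<Longrightarrow> b < \<bar>y\<bar>"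
    unfolding quantize_def by (auto split: if_splits)
qed

lemma quantize_in_simple_span:
  assumes "g \<in> lpinf p w" "0 < a"
  shows "(\<lambda>x. quantize a b (g x)) \<in> simple_span w"
proof (rule simple_span_if_finite_range)
  define K where "K = \<lceil>b / a\<rceil>"
  have "quantize a b (g x) \<in> insert 0 ((\<lambda>k. a * of_int k) ` {-K..K})" for x
  proof (cases "a < \<bar>g x\<bar> \<and> \<bar>g x\<bar> \<le> b")
    case True
    have "\<bar>g x / a\<bar> \<le> b / a" using True \<open>0 < a\<close> by (simp add: abs_divide divide_right_mono)
    hence "\<bar>g x / a\<bar> \<le> K" unfolding K_def using le_of_int_ceiling[of "b / a"] by linarith
    hence "- K \<le> g x / a" "g x / a < K + 1" unfolding abs_le_iff by linarith+
    hence "\<lfloor>g x / a\<rfloor> \<in> {-K..K}" by (simp add: le_floor_iff floor_le_iff)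
    thus ?thesis using True unfolding quantize_def by auto
  qed (auto simp: quantize_def)
  hence "range (\<lambda>x. quantize a b (g x)) \<subseteq> insert 0 ((\<lambda>k. a * of_int k) ` {-K..K})" by blast
  thus "finite (range (\<lambda>x. quantize a b (g x)))" by (rule finite_subset) simp
  have "wmu w {x. quantize a b (g x) \<noteq> 0} \<le> wmu w {x. a < \<bar>g x\<bar>}"
    by (intro wmu_mono) (auto simp: quantize_def split: if_splits)
  also have "\<dots> < \<infinity>" using assms by (rule wmu_level_finite)
  finally show "wmu w {x. quantize a b (g x) \<noteq> 0} < \<infinity>" .
qed

lemma wnorm_p_quantize_error_le:
  assumes "0 \<le> p" "0 < a"
    and tail: "\<And>d. 0 < d \<Longrightarrow> d < a \<or> b \<le> d \<Longrightarrow> ennreal (d powr p) * wmu w {x. d < \<bar>g x\<bar>} \<le> B"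
  shows "wnorm_p p w (\<lambda>x. g x - quantize a b (g x)) \<le> B"
proof (rule wnorm_p_leI)
  fix c :: real assume "0 < c"
  show "ennreal (c powr p) * wmu w {x. c < \<bar>g x - quantize a b (g x)\<bar>} \<le> B"
  proof (cases "c < a")
    case True
    have "wmu w {x. c < \<bar>g x - quantize a b (g x)\<bar>} \<le> wmu w {x. c < \<bar>g x\<bar>}"
      using quantize_error(1)[OF \<open>0 < a\<close>] by (intro wmu_mono) (auto intro: less_le_trans)
    hence "ennreal (c powr p) * wmu w {x. c < \<bar>g x - quantize a b (g x)\<bar>}
        \<le> ennreal (c powr p) * wmu w {x. c < \<bar>g x\<bar>}" by (rule mult_left_mono) simp
    also have "\<dots> \<le> B" using \<open>0 < c\<close> True by (intro tail) auto
    finally show ?thesis .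
  next
    case False
    define d where "d = max b c"
    have "c powr p \<le> d powr p" using \<open>0 < c\<close> \<open>0 \<le> p\<close> by (simp add: d_def powr_mono2)
    moreover have "wmu w {x. c < \<bar>g x - quantize a b (g x)\<bar>} \<le> wmu w {x. d < \<bar>g x\<bar>}"
    proof (intro wmu_mono subsetI)
      fix x assume "x \<in> {x. c < \<bar>g x - quantize a b (g x)\<bar>}"
      hence "c < \<bar>g x - quantize a b (g x)\<bar>" by simp
      thus "x \<in> {x. d < \<bar>g x\<bar>}"
        using quantize_error[OF \<open>0 < a\<close>, of "g x" b] False by (simp add: d_def)
    qed
    ultimately have "ennreal (c powr p) * wmu w {x. c < \<bar>g x - quantize a b (g x)\<bar>}
        \<le> ennreal (d powr p) * wmu w {x. d < \<bar>g x\<bar>}" by (intro mult_mono ennreal_leI) simp_all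
    also have "\<dots> \<le> B" using \<open>0 < c\<close> by (intro tail) (simp_all add: d_def)
    finally show ?thesis .
  qed
qed

lemma mpinf_if_finitely_many_large_levels:
  assumes "0 \<le> p" and g: "g \<in> lpinf p w"
    and levels: "\<And>\<epsilon>. 0 < \<epsilon> \<Longrightarrow> finite {m. ennreal \<epsilon> \<le> dyadic_level p w g m}"
  shows "g \<in> mpinf p w"
  unfolding mpinf_def
proof (intro CollectI conjI g allI impI)
  fix e :: real assume "0 < e"
  define \<epsilon> where "\<epsilon> = e / (2 * 2 powr p)"
  have "0 < \<epsilon>" using \<open>0 < e\<close> by (simp add: \<epsilon>_def)
  then obtain k where k: "abs ` {m. ennreal \<epsilon> \<le> dyadic_level p w g m} \<subseteq> {..<k}"
    using levels finite_int_iff_bounded by blast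
  have small: "dyadic_level p w g m < ennreal \<epsilon>" if "nat k \<le> \<bar>m\<bar>" for m
  proof (rule ccontr)
    assume "\<not> dyadic_level p w g m < ennreal \<epsilon>"
    hence "\<bar>m\<bar> < k" using k by (auto simp: not_less)
    thus False using that by linarith
  qed
  define a :: real where "a = 2 powr - real (nat k)"
  define b :: real where "b = 2 powr real (nat k)"
  have "0 < a" by (simp add: a_def)
  have "wnorm_p p w (\<lambda>x. g x - quantize a b (g x)) \<le> ennreal (e / 2)"
  proof (rule wnorm_p_quantize_error_le[OF \<open>0 \<le> p\<close> \<open>0 < a\<close>])
    fix d :: real assume "0 < d" "d < a \<or> b \<le> d"
    hence "log 2 d < - real (nat k) \<or> real (nat k) \<le> log 2 d"
      by (auto simp: a_def b_def log_less_iff le_log_iff)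
    hence large: "nat k \<le> \<bar>\<lfloor>log 2 d\<rfloor>\<bar>" by linarith
    have "ennreal (d powr p) * wmu w {x. d < \<bar>g x\<bar>}
        \<le> ennreal (2 powr p) * dyadic_level p w g \<lfloor>log 2 d\<rfloor>"
      using \<open>0 < d\<close> \<open>0 \<le> p\<close> by (rule level_le_dyadic_level)
    also have "\<dots> \<le> ennreal (2 powr p) * ennreal \<epsilon>"
      using small[OF large] by (intro mult_left_mono) auto
    also have "\<dots> = ennreal (e / 2)"
      using \<open>0 < \<epsilon>\<close> by (simp add: \<epsilon>_def ennreal_mult'[symmetric])
    finally show "ennreal (d powr p) * wmu w {x. d < \<bar>g x\<bar>} \<le> ennreal (e / 2)" .
  qed
  also have "\<dots> < ennreal e" using \<open>0 < e\<close> by (simp add: ennreal_lessI)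
  finally show "\<exists>h\<in>simple_span w. wnorm_p p w (\<lambda>x. g x - h x) < ennreal e"
    using quantize_in_simple_span[OF g \<open>0 < a\<close>, of b]
    by (intro bexI[of _ "\<lambda>x. quantize a b (g x)"])
qed

section \<open>Disjointly supported families\<close>

lemma infinite_uncountable_sections:
  fixes P :: "'a \<Rightarrow> 'b::countable \<Rightarrow> bool"
  assumes "uncountable U" "\<And>x. x \<in> U \<Longrightarrow> infinite {m. P x m}"
  shows "infinite {m. uncountable {x \<in> U. P x m}}"
proof
  let ?Z = "{m. uncountable {x \<in> U. P x m}}"
  assume "finite ?Z"
  have "U \<subseteq> (\<Union>m\<in>-?Z. {x \<in> U. P x m})"
  proof
    fix x assume "x \<in> U"
    hence "\<not> {m. P x m} \<subseteq> ?Z" using assms(2) \<open>finite ?Z\<close> finite_subset by blast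
    thus "x \<in> (\<Union>m\<in>-?Z. {x \<in> U. P x m})" using \<open>x \<in> U\<close> by blast
  qed
  moreover have "countable (\<Union>m\<in>-?Z. {x \<in> U. P x m})" by (rule countable_UN) auto
  ultimately show False using assms(1) countable_subset by blast
qed

lemma ex_pairwise_unrelated_choice:
  assumes "finite S" "\<And>s. s \<in> S \<Longrightarrow> uncountable (B s)" "symp R"
    and "\<And>F. finite F \<Longrightarrow> countable {y. \<exists>x\<in>F. R x y}"
  shows "\<exists>f. (\<forall>s\<in>S. f s \<in> B s) \<and> inj_on f S \<and> (\<forall>s\<in>S. \<forall>s'\<in>S. s \<noteq> s' \<longrightarrow> \<not> R (f s) (f s'))"
  using assms(1,2)
proof (induction S rule: finite_induct)
  case (insert s S)
  then obtain f where f: "\<forall>s\<in>S. f s \<in> B s" "inj_on f S"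
    "\<forall>s\<in>S. \<forall>s'\<in>S. s \<noteq> s' \<longrightarrow> \<not> R (f s) (f s')" by auto
  have "countable ({y. \<exists>x\<in>f ` S. R x y} \<union> f ` S)"
    using assms(4)[of "f ` S"] insert.hyps(1) by (simp add: countable_finite)
  moreover have "uncountable (B s)" using insert.prems by simp
  ultimately have "\<not> B s \<subseteq> {y. \<exists>x\<in>f ` S. R x y} \<union> f ` S"
    using countable_subset by blast
  then obtain y where y: "y \<in> B s" "y \<notin> f ` S" "\<And>s'. s' \<in> S \<Longrightarrow> \<not> R (f s') y"
    by blast
  have "\<not> R y (f s')" if "s' \<in> S" for s'
    using y(3)[OF that] \<open>symp R\<close> by (blast dest: sympD)
  define f' where "f' = f(s := y)"
  have f'_S: "f' s' = f s'" if "s' \<in> S" for s' using that insert.hyps(2) by (auto simp: f'_def)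
  have f'_s: "f' s = y" by (simp add: f'_def)
  have "\<forall>s'\<in>insert s S. f' s' \<in> B s'" using f(1) y(1) f'_S f'_s by simp
  moreover have "inj_on f' (insert s S)"
  proof -
    have "inj_on f' S" using f(2) by (simp only: inj_on_cong[of S f' f, OF f'_S])
    moreover have "f' ` S = f ` S" using f'_S by (rule image_cong[OF refl])
    ultimately show ?thesis using y(2) f'_s insert.hyps(2) by simp
  qed
  moreover have "\<not> R (f' s1) (f' s2)" if "s1 \<in> insert s S" "s2 \<in> insert s S" "s1 \<noteq> s2" for s1 s2
    using that f(3) y(3) \<open>\<And>s'. s' \<in> S \<Longrightarrow> \<not> R y (f s')\<close> f'_S f'_s by (cases "s1 = s"; cases "s2 = s") auto
  ultimately show ?case by blast
qed simp

lemma sum_apply_disjoint_support: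
  assumes "finite S" "s \<in> S" "\<And>s'. s' \<in> S \<Longrightarrow> s' \<noteq> s \<Longrightarrow> g s' y = 0"
  shows "(\<Sum>s'\<in>S. g s' y) = (g s y :: real)"
  by (subst sum.mono_neutral_right[OF assms(1), of "{s}"]) (use assms in auto)

lemma wnorm_p_sum_disjoint_support_ge:
  assumes "finite S" "0 < t"
    and disjoint: "\<And>s s' y. s \<in> S \<Longrightarrow> s' \<in> S \<Longrightarrow> s \<noteq> s' \<Longrightarrow> g s y = 0 \<or> g s' y = 0"
  shows "ennreal (t powr p) * (\<Sum>s\<in>S. wmu w {y. t < \<bar>g s y\<bar>}) \<le> wnorm_p p w (\<lambda>y. \<Sum>s\<in>S. g s y)"
proof -
  have "(\<Sum>s\<in>S. wmu w {y. t < \<bar>g s y\<bar>}) = wmu w (\<Union>s\<in>S. {y. t < \<bar>g s y\<bar>})"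
  proof (intro wmu_UN_disjoint[symmetric] \<open>finite S\<close> equals0I)
    fix s s' y assume "s \<in> S" "s' \<in> S" "s \<noteq> s'" "y \<in> {y. t < \<bar>g s y\<bar>} \<inter> {y. t < \<bar>g s' y\<bar>}"
    thus False using disjoint[of s s' y] \<open>0 < t\<close> by auto
  qed
  also have "\<dots> \<le> wmu w {y. t < \<bar>\<Sum>s\<in>S. g s y\<bar>}"
  proof (intro wmu_mono subsetI)
    fix y assume "y \<in> (\<Union>s\<in>S. {y. t < \<bar>g s y\<bar>})"
    then obtain s where s: "s \<in> S" "t < \<bar>g s y\<bar>" by blast
    have "g s' y = 0" if "s' \<in> S" "s' \<noteq> s" for s'
      using disjoint[of s s' y] s that \<open>0 < t\<close> by auto
    hence "(\<Sum>s'\<in>S. g s' y) = g s y" using assms(1) s(1) by (rule sum_apply_disjoint_support[rotated 2])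
    thus "y \<in> {y. t < \<bar>\<Sum>s\<in>S. g s y\<bar>}" using s by simp
  qed
  finally have "ennreal (t powr p) * (\<Sum>s\<in>S. wmu w {y. t < \<bar>g s y\<bar>})
      \<le> ennreal (t powr p) * wmu w {y. t < \<bar>\<Sum>s\<in>S. g s y\<bar>}" by (rule mult_left_mono) simp
  also have "\<dots> \<le> wnorm_p p w (\<lambda>y. \<Sum>s\<in>S. g s y)" by (rule wnorm_p_ge[OF \<open>0 < t\<close>])
  finally show ?thesis .
qed

lemma ex_nat_powr_gt:
  assumes "0 < q"
  shows "\<exists>N::nat. C < real N powr q"
proof -
  obtain N :: nat where "max 0 C powr (1 / q) < N" using reals_Archimedean2 by blast
  hence "(max 0 C powr (1 / q)) powr q < real N powr q" using assms by (intro powr_less_mono2) auto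
  thus ?thesis using assms by (auto simp: powr_powr)
qed

lemma sum_power_le_twice_power:
  fixes r :: real
  assumes "2 \<le> r" "D \<subseteq> {..n}"
  shows "(\<Sum>d\<in>D. r ^ d) \<le> 2 * r ^ n"
proof -
  have "(\<Sum>d\<le>n. r ^ d) \<le> 2 * r ^ n" for n
  proof (induction n)
    case (Suc n)
    moreover have "2 * r ^ n \<le> r * r ^ n" using assms(1) by (intro mult_right_mono) auto
    ultimately show ?case by simp
  qed simp
  moreover have "(\<Sum>d\<in>D. r ^ d) \<le> (\<Sum>d\<le>n. r ^ d)"
    using assms by (intro sum_mono2) auto
  ultimately show ?thesis by (meson order_trans)
qed

(* Slot (d, j) will carry the weight 2^-d: every level d then contributes at least 1 to the sum
   of p-th powers of the weights, while the weak norm of the weighted family stays below 4. *)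
definition dyadic_slots :: "real \<Rightarrow> nat set \<Rightarrow> (nat \<times> nat) set" where
  "dyadic_slots p D = Sigma D (\<lambda>d. {..<nat \<lceil>2 powr (real d * p)\<rceil>})"

lemma card_dyadic_slots_le:
  fixes D :: "nat set" and p t :: real
  assumes "1 \<le> p" "0 < t" "finite D"
  shows "t powr p * card {s \<in> dyadic_slots p D. t < 2 powr - real (fst s)} \<le> 4"
proof -
  define r where "r = 2 powr p"
  have "2 \<le> r" using powr_mono[of 1 p 2] assms(1) by (simp add: r_def)
  have r_power: "2 powr (real d * p) = r ^ d" for d :: nat
    by (simp add: r_def powr_realpow[symmetric] powr_powr mult.commute)
  define E where "E = {d \<in> D. t < 2 powr - real d}"
  have "finite E" using assms(3) by (simp add: E_def)
  have "{s \<in> dyadic_slots p D. t < 2 powr - real (fst s)} = Sigma E (\<lambda>d. {..<nat \<lceil>r ^ d\<rceil>})"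
    by (auto simp: dyadic_slots_def E_def r_power)
  hence card_eq: "card {s \<in> dyadic_slots p D. t < 2 powr - real (fst s)}
      = (\<Sum>d\<in>E. nat \<lceil>r ^ d\<rceil>)"
    using \<open>finite E\<close> by (simp add: card_SigmaI)
  show ?thesis
  proof (cases "E = {}")
    case False
    define n where "n = Max E"
    have "n \<in> E" "E \<subseteq> {..n}" using \<open>finite E\<close> False by (auto simp: n_def)
    have "t powr p \<le> (2 powr - real n) powr p"
      using \<open>n \<in> E\<close> assms(1,2) by (intro powr_mono2) (auto simp: E_def)
    also have "\<dots> = 2 powr - (real n * p)" by (subst powr_powr) simp
    also have "\<dots> = 1 / r ^ n" by (simp only: powr_minus_divide r_power)
    finally have t_le: "t powr p \<le> 1 / r ^ n" .
    have "real (nat \<lceil>r ^ d\<rceil>) \<le> 2 * r ^ d" for d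
    proof -
      have "1 \<le> r ^ d" using \<open>2 \<le> r\<close> by (intro one_le_power) simp
      thus ?thesis using ceiling_correct[of "r ^ d"] by linarith
    qed
    hence "real (\<Sum>d\<in>E. nat \<lceil>r ^ d\<rceil>) \<le> 2 * (\<Sum>d\<in>E. r ^ d)"
      by (simp add: sum_distrib_left sum_mono)
    also have "\<dots> \<le> 4 * r ^ n" using sum_power_le_twice_power[OF \<open>2 \<le> r\<close> \<open>E \<subseteq> {..n}\<close>] by simp
    finally have "t powr p * real (\<Sum>d\<in>E. nat \<lceil>r ^ d\<rceil>) \<le> 1 / r ^ n * (4 * r ^ n)"
      by (rule mult_mono[OF t_le _ _ of_nat_0_le_iff]) (use \<open>2 \<le> r\<close> in simp)
    thus ?thesis using \<open>2 \<le> r\<close> by (simp add: card_eq)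
  qed (simp add: card_eq)
qed

lemma card_le_sum_dyadic_slots:
  fixes D :: "nat set" and p :: real
  assumes "finite D"
  shows "real (card D) \<le> (\<Sum>s\<in>dyadic_slots p D. (2 powr - real (fst s)) powr p)"
proof -
  have "1 \<le> real (nat \<lceil>2 powr (real d * p)\<rceil>) * (2 powr - real d) powr p" for d
  proof -
    have "(2 powr - real d) powr p = 1 / 2 powr (real d * p)"
      by (subst powr_powr) (simp only: mult_minus_left powr_minus_divide)
    thus ?thesis using le_of_int_ceiling[of "2 powr (real d * p)"] by simp
  qed
  hence "(\<Sum>d\<in>D. 1) \<le> (\<Sum>d\<in>D. real (nat \<lceil>2 powr (real d * p)\<rceil>) * (2 powr - real d) powr p)"
    by (intro sum_mono)
  hence "real (card D) \<le> (\<Sum>d\<in>D. real (nat \<lceil>2 powr (real d * p)\<rceil>) * (2 powr - real d) powr p)"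
    by simp
  also have "\<dots> = (\<Sum>d\<in>D. \<Sum>j<nat \<lceil>2 powr (real d * p)\<rceil>. (2 powr - real d) powr p)" by simp
  also have "\<dots> = (\<Sum>s\<in>dyadic_slots p D. (2 powr - real (fst s)) powr p)"
    unfolding dyadic_slots_def using assms by (subst sum.Sigma) (simp_all add: case_prod_beta)
  finally show ?thesis .
qed

lemma dyadic_level_scale:
  assumes "0 < a"
  shows "ennreal ((a * 2 powr m) powr p) * wmu w {x. a * 2 powr m < \<bar>a * g x\<bar>}
    = ennreal (a powr p) * dyadic_level p w g m"
proof -
  have "{x. a * 2 powr m < \<bar>a * g x\<bar>} = {x. 2 powr m < \<bar>g x\<bar>}"
    using assms by (simp add: abs_mult)
  moreover have "ennreal ((a * 2 powr m) powr p) = ennreal (a powr p) * ennreal ((2 powr m) powr p)"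
    using assms by (simp add: powr_mult ennreal_mult)
  ultimately show ?thesis by (simp add: dyadic_level_def mult.assoc)
qed

lemma wnorm_p_sum_dyadic_scaled_ge:
  fixes k :: "'s \<Rightarrow> nat"
  assumes "finite S" "0 < \<epsilon>"
    and disjoint: "\<And>s s' y. s \<in> S \<Longrightarrow> s' \<in> S \<Longrightarrow> s \<noteq> s' \<Longrightarrow> g s y = 0 \<or> g s' y = 0"
    and levels: "\<And>s. s \<in> S \<Longrightarrow> ennreal \<epsilon> \<le> dyadic_level p w (g s) (m + int (k s))"
  shows "ennreal ((\<Sum>s\<in>S. (2 powr - real (k s)) powr p) * \<epsilon>)
    \<le> wnorm_p p w (\<lambda>y. \<Sum>s\<in>S. 2 powr - real (k s) * g s y)"
proof -
  define c where "c = (2::real) powr m"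
  have scale: "2 powr - real (k s) * 2 powr (m + int (k s)) = c" for s
    by (simp add: c_def powr_add[symmetric])
  have "(\<Sum>s\<in>S. ennreal ((2 powr - real (k s)) powr p) * ennreal \<epsilon>)
      = (\<Sum>s\<in>S. ennreal ((2 powr - real (k s)) powr p * \<epsilon>))"
    using \<open>0 < \<epsilon>\<close> by (simp add: ennreal_mult'')
  also have "\<dots> = ennreal ((\<Sum>s\<in>S. (2 powr - real (k s)) powr p) * \<epsilon>)"
    using \<open>0 < \<epsilon>\<close> by (subst sum_ennreal) (simp_all add: sum_distrib_right)
  finally have "ennreal ((\<Sum>s\<in>S. (2 powr - real (k s)) powr p) * \<epsilon>)
      = (\<Sum>s\<in>S. ennreal ((2 powr - real (k s)) powr p) * ennreal \<epsilon>)" ..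
  also have "\<dots> \<le> (\<Sum>s\<in>S. ennreal (c powr p) * wmu w {y. c < \<bar>2 powr - real (k s) * g s y\<bar>})"
  proof (rule sum_mono)
    fix s assume "s \<in> S"
    have "ennreal ((2 powr - real (k s)) powr p) * ennreal \<epsilon>
        \<le> ennreal ((2 powr - real (k s)) powr p) * dyadic_level p w (g s) (m + int (k s))"
      using levels[OF \<open>s \<in> S\<close>] by (rule mult_left_mono) simp
    also have "\<dots> = ennreal (c powr p) * wmu w {y. c < \<bar>2 powr - real (k s) * g s y\<bar>}"
      using dyadic_level_scale[of "2 powr - real (k s)" "m + int (k s)" p w "g s"]
      unfolding scale by (rule sym) simp
    finally show "ennreal ((2 powr - real (k s)) powr p) * ennreal \<epsilon>
        \<le> ennreal (c powr p) * wmu w {y. c < \<bar>2 powr - real (k s) * g s y\<bar>}" .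
  qed
  also have "\<dots> \<le> wnorm_p p w (\<lambda>y. \<Sum>s\<in>S. 2 powr - real (k s) * g s y)"
    unfolding sum_distrib_left[symmetric]
    by (rule wnorm_p_sum_disjoint_support_ge) (use assms(1) disjoint in \<open>auto simp: c_def\<close>)
  finally show ?thesis .
qed

section \<open>Bounded operators on the counting-measure space\<close>

context
  fixes p :: real and w :: "'g \<Rightarrow> real" and T :: "('a \<Rightarrow> real) \<Rightarrow> ('g \<Rightarrow> real)"
  assumes p: "1 < p" and w_pos: "\<forall>x. 0 < w x"
    and T: "bounded_linear_wk p (\<lambda>_. 1) (mpinf p (\<lambda>_. 1)) w T"
begin

lemma T_sum_indicator:
  "finite F \<Longrightarrow> T (\<lambda>x. \<Sum>i\<in>F. a i * indicator {b i} x) = (\<lambda>y. \<Sum>i\<in>F. a i * T (indicator {b i}) y)"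
  using p by (intro bounded_linear_wk_sum_indicator[OF _ T]) auto

lemma T_indicator_lpinf: "T (indicator {\<alpha>}) \<in> lpinf p w"
proof -
  have "finite {x. indicator {\<alpha>} x \<noteq> (0::real)}" by (rule finite_subset[of _ "{\<alpha>}"]) (auto split: split_indicator)
  hence "indicator {\<alpha>} \<in> mpinf p (\<lambda>_. 1)" using p by (intro mpinf_if_finite_support) auto
  thus ?thesis using T unfolding bounded_linear_wk_def by blast
qed

lemma T_bound:
  obtains K where
    "\<And>f. f \<in> mpinf p (\<lambda>_. 1) \<Longrightarrow> wnorm_p p w (T f) \<le> ennreal (K powr p) * wnorm_p p (\<lambda>_. 1) f"
  using T unfolding bounded_linear_wk_def by blast

lemma finite_large_column:
  assumes "0 < \<eta>"
  shows "finite {\<alpha>. \<eta> < \<bar>T (indicator {\<alpha>}) \<gamma>\<bar>}"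
proof (rule ccontr)
  assume "infinite {\<alpha>. \<eta> < \<bar>T (indicator {\<alpha>}) \<gamma>\<bar>}"
  obtain K where K: "\<And>f. f \<in> mpinf p (\<lambda>_. 1) \<Longrightarrow> wnorm_p p w (T f) \<le> ennreal (K powr p) * wnorm_p p (\<lambda>_. 1) f"
    using T_bound by blast
  define X where "X = (\<eta> / 2) powr p * w \<gamma>"
  have "0 < X" using \<open>0 < \<eta>\<close> w_pos by (simp add: X_def)
  obtain N :: nat where N: "K powr p / X < real N powr (p - 1)" using ex_nat_powr_gt p by fastforce
  moreover have "0 \<le> K powr p / X" using \<open>0 < X\<close> by simp
  ultimately have "0 < N" by (cases "N = 0") auto
  obtain F where F: "F \<subseteq> {\<alpha>. \<eta> < \<bar>T (indicator {\<alpha>}) \<gamma>\<bar>}" "finite F" "card F = N"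
    using infinite_arbitrarily_large[OF \<open>infinite _\<close>] by blast
  define f where "f = (\<lambda>x. \<Sum>\<alpha>\<in>F. sgn (T (indicator {\<alpha>}) \<gamma>) * indicator {\<alpha>} x)"
  \<comment> \<open>||f||^p <= N while T f has value at least N \<eta> at \<gamma>; as p > 1 this beats the bound K\<close>
  have "real N * \<eta> \<le> T f \<gamma>"
  proof -
    have "T f \<gamma> = (\<Sum>\<alpha>\<in>F. \<bar>T (indicator {\<alpha>}) \<gamma>\<bar>)"
      unfolding f_def T_sum_indicator[OF \<open>finite F\<close>] by (auto simp: sgn_if intro!: sum.cong)
    also have "\<dots> \<ge> (\<Sum>\<alpha>\<in>F. \<eta>)" using F(1) by (intro sum_mono) auto
    finally show ?thesis using F(3) by simp
  qed
  define c where "c = real N * \<eta> / 2"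
  have "0 < c" using \<open>0 < N\<close> \<open>0 < \<eta>\<close> by (simp add: c_def)
  hence "ennreal (c powr p) * ennreal (w \<gamma>) \<le> wnorm_p p w (T f)"
    using \<open>real N * \<eta> \<le> T f \<gamma>\<close> by (intro wnorm_p_ge_weight) (auto simp: c_def)
  also have "\<dots> \<le> ennreal (K powr p) * wnorm_p p (\<lambda>_. 1) f"
    unfolding f_def using p by (intro K mpinf_sum_indicator_singleton \<open>finite F\<close>) simp
  also have "\<dots> \<le> ennreal (K powr p) * ennreal N"
    unfolding f_def F(3)[symmetric] using p
    by (intro mult_left_mono wnorm_p_count_sum_indicator_le_card \<open>finite F\<close>) (auto simp: sgn_if)
  finally have "ennreal (c powr p * w \<gamma>) \<le> ennreal (K powr p * N)"
    using w_pos by (simp add: ennreal_mult'[symmetric] ennreal_mult''[symmetric])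
  hence "c powr p * w \<gamma> \<le> K powr p * N"
    by (subst (asm) ennreal_le_iff) auto
  moreover have "c powr p * w \<gamma> = real N * (real N powr (p - 1) * X)"
  proof -
    have "c powr p = real N powr p * (\<eta> / 2) powr p"
      unfolding c_def times_divide_eq_right[symmetric] using \<open>0 < \<eta>\<close> by (intro powr_mult)
    moreover have "real N powr p = real N * real N powr (p - 1)" using \<open>0 < N\<close> by (simp add: powr_diff)
    ultimately show ?thesis by (simp add: X_def mult_ac)
  qed
  moreover have "K powr p < real N powr (p - 1) * X" using N \<open>0 < X\<close> by (simp add: divide_less_eq)
  ultimately show False using \<open>0 < N\<close> by simp
qed

lemma countable_column: "countable {\<alpha>. T (indicator {\<alpha>}) \<gamma> \<noteq> 0}"
proof (rule countable_if_countable_levels[of _ "\<lambda>e \<alpha>. e < \<bar>T (indicator {\<alpha>}) \<gamma>\<bar>"])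
  fix e :: real assume "0 < e"
  show "countable {\<alpha> \<in> {\<alpha>. T (indicator {\<alpha>}) \<gamma> \<noteq> 0}. e < \<bar>T (indicator {\<alpha>}) \<gamma>\<bar>}"
    by (intro countable_finite finite_subset[OF _ finite_large_column[OF \<open>0 < e\<close>]]) auto
next
  fix \<alpha> assume "\<alpha> \<in> {\<alpha>. T (indicator {\<alpha>}) \<gamma> \<noteq> 0}"
  thus "\<exists>e>0. e < \<bar>T (indicator {\<alpha>}) \<gamma>\<bar>" by (intro exI[of _ "\<bar>T (indicator {\<alpha>}) \<gamma>\<bar> / 2"]) auto
qed auto

lemma countable_overlapping_supports:
  assumes "finite F"
  shows "countable {\<beta>. \<exists>\<alpha>\<in>F. \<exists>\<gamma>. T (indicator {\<alpha>}) \<gamma> \<noteq> 0 \<and> T (indicator {\<beta>}) \<gamma> \<noteq> 0}"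
proof -
  have "countable (\<Union>\<alpha>\<in>F. \<Union>\<gamma>\<in>{\<gamma>. T (indicator {\<alpha>}) \<gamma> \<noteq> 0}. {\<beta>. T (indicator {\<beta>}) \<gamma> \<noteq> 0})"
    using countable_support_lpinf[OF w_pos T_indicator_lpinf] countable_column assms
    by (intro countable_UN) (auto intro: countable_finite)
  moreover have "{\<beta>. \<exists>\<alpha>\<in>F. \<exists>\<gamma>. T (indicator {\<alpha>}) \<gamma> \<noteq> 0 \<and> T (indicator {\<beta>}) \<gamma> \<noteq> 0}
      = (\<Union>\<alpha>\<in>F. \<Union>\<gamma>\<in>{\<gamma>. T (indicator {\<alpha>}) \<gamma> \<noteq> 0}. {\<beta>. T (indicator {\<beta>}) \<gamma> \<noteq> 0})"
    by blast
  ultimately show ?thesis by simp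
qed

lemma card_uncountable_dyadic_levels_le:
  fixes D :: "nat set" and \<epsilon> :: real
  assumes K: "\<And>f. f \<in> mpinf p (\<lambda>_. 1) \<Longrightarrow> wnorm_p p w (T f) \<le> ennreal (K powr p) * wnorm_p p (\<lambda>_. 1) f"
    and "finite D" "0 < \<epsilon>"
    and levels: "\<And>d. d \<in> D \<Longrightarrow> uncountable {\<alpha>. ennreal \<epsilon> \<le> dyadic_level p w (T (indicator {\<alpha>})) (m0 + int d)}"
  shows "real (card D) * \<epsilon> \<le> 4 * K powr p"
proof -
  define Slots where "Slots = dyadic_slots p D"
  define B where "B s = {\<alpha>. ennreal \<epsilon> \<le> dyadic_level p w (T (indicator {\<alpha>})) (m0 + int (fst s))}"
    for s :: "nat \<times> nat"
  define R where "R \<alpha> \<beta> \<longleftrightarrow> (\<exists>\<gamma>. T (indicator {\<alpha>}) \<gamma> \<noteq> 0 \<and> T (indicator {\<beta>}) \<gamma> \<noteq> 0)" for \<alpha> \<beta>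
  have "finite Slots" using \<open>finite D\<close> by (simp add: Slots_def dyadic_slots_def)
  have "\<exists>\<alpha>. (\<forall>s\<in>Slots. \<alpha> s \<in> B s) \<and> inj_on \<alpha> Slots \<and>
      (\<forall>s\<in>Slots. \<forall>s'\<in>Slots. s \<noteq> s' \<longrightarrow> \<not> R (\<alpha> s) (\<alpha> s'))"
  proof (rule ex_pairwise_unrelated_choice[OF \<open>finite Slots\<close>])
    show "uncountable (B s)" if "s \<in> Slots" for s
      using levels that by (auto simp: Slots_def dyadic_slots_def B_def)
    show "symp R" unfolding symp_def R_def by blast
    show "countable {\<beta>. \<exists>\<alpha>\<in>F. R \<alpha> \<beta>}" if "finite F" for F
      using countable_overlapping_supports[OF that] by (simp add: R_def)
  qed
  then obtain \<alpha> where \<alpha>_level: "\<forall>s\<in>Slots. \<alpha> s \<in> B s" and "inj_on \<alpha> Slots"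
    and \<alpha>_disjoint: "\<forall>s\<in>Slots. \<forall>s'\<in>Slots. s \<noteq> s' \<longrightarrow> \<not> R (\<alpha> s) (\<alpha> s')"
    by (elim exE conjE)
  define f where "f = (\<lambda>x. \<Sum>s\<in>Slots. 2 powr - real (fst s) * indicator {\<alpha> s} x)"
  have "f \<in> mpinf p (\<lambda>_. 1)"
    unfolding f_def using p \<open>finite Slots\<close> by (intro mpinf_sum_indicator_singleton) auto
  have norm_f: "wnorm_p p (\<lambda>_. 1) f \<le> ennreal 4"
    unfolding f_def using card_dyadic_slots_le[OF _ _ \<open>finite D\<close>] p
    by (intro wnorm_p_count_sum_indicator_le[OF \<open>finite Slots\<close> \<open>inj_on \<alpha> Slots\<close>]) (simp add: Slots_def)
  have "real (card D) \<le> (\<Sum>s\<in>Slots. (2 powr - real (fst s)) powr p)"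
    unfolding Slots_def using \<open>finite D\<close> by (rule card_le_sum_dyadic_slots)
  hence "ennreal (real (card D) * \<epsilon>) \<le> ennreal ((\<Sum>s\<in>Slots. (2 powr - real (fst s)) powr p) * \<epsilon>)"
    using \<open>0 < \<epsilon>\<close> by (intro ennreal_leI mult_right_mono) auto
  also have "\<dots> \<le> wnorm_p p w (T f)"
    unfolding f_def T_sum_indicator[OF \<open>finite Slots\<close>]
  proof (rule wnorm_p_sum_dyadic_scaled_ge[where m = m0, OF \<open>finite Slots\<close> \<open>0 < \<epsilon>\<close>])
    show "T (indicator {\<alpha> s}) y = 0 \<or> T (indicator {\<alpha> s'}) y = 0"
      if "s \<in> Slots" "s' \<in> Slots" "s \<noteq> s'" for s s' y
      using \<alpha>_disjoint that by (auto simp: R_def)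
  qed (use \<alpha>_level in \<open>simp add: B_def\<close>)
  also have "\<dots> \<le> ennreal (K powr p) * wnorm_p p (\<lambda>_. 1) f" by (rule K) fact
  also have "\<dots> \<le> ennreal (K powr p) * ennreal 4" using norm_f by (rule mult_left_mono) simp
  finally have "ennreal (real (card D) * \<epsilon>) \<le> ennreal (4 * K powr p)"
    by (simp add: ennreal_mult'' mult.commute)
  thus ?thesis by (subst (asm) ennreal_le_iff) simp_all
qed

lemma finite_uncountable_dyadic_levels:
  assumes "0 < \<epsilon>"
  shows "finite {m. uncountable {\<alpha>. ennreal \<epsilon> \<le> dyadic_level p w (T (indicator {\<alpha>})) m}}"
    (is "finite ?Z")
proof (rule ccontr)
  assume "infinite ?Z"
  obtain K where K: "\<And>f. f \<in> mpinf p (\<lambda>_. 1) \<Longrightarrow> wnorm_p p w (T f) \<le> ennreal (K powr p) * wnorm_p p (\<lambda>_. 1) f"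
    using T_bound by blast
  obtain L :: nat where "4 * K powr p / \<epsilon> < L" using reals_Archimedean2 by blast
  hence L: "4 * K powr p < L * \<epsilon>" using \<open>0 < \<epsilon>\<close> by (simp add: divide_less_eq)
  obtain Z where "Z \<subseteq> ?Z" "finite Z" "card Z = L"
    using infinite_arbitrarily_large[OF \<open>infinite ?Z\<close>] by blast
  define m0 where "m0 = Min Z"
  have m0_le: "m0 \<le> m" if "m \<in> Z" for m using \<open>finite Z\<close> that by (simp add: m0_def)
  have "inj_on (\<lambda>m. nat (m - m0)) Z"
  proof (rule inj_onI)
    fix x y assume "x \<in> Z" "y \<in> Z" "nat (x - m0) = nat (y - m0)"
    thus "x = y" using m0_le[of x] m0_le[of y] by simp
  qed
  hence "card ((\<lambda>m. nat (m - m0)) ` Z) = L" by (simp add: card_image \<open>card Z = L\<close>)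
  moreover have "real (card ((\<lambda>m. nat (m - m0)) ` Z)) * \<epsilon> \<le> 4 * K powr p"
  proof (rule card_uncountable_dyadic_levels_le[OF K _ \<open>0 < \<epsilon>\<close>])
    fix d assume "d \<in> (\<lambda>m. nat (m - m0)) ` Z"
    then obtain m where "m \<in> Z" "d = nat (m - m0)" by blast
    hence "m0 + int d \<in> ?Z" using \<open>Z \<subseteq> ?Z\<close> m0_le by auto
    thus "uncountable {\<alpha>. ennreal \<epsilon> \<le> dyadic_level p w (T (indicator {\<alpha>})) (m0 + int d)}" by simp
  qed (use \<open>finite Z\<close> in auto)
  ultimately show False using L by simp
qed

lemma countable_not_mpinf: "countable {\<alpha>. T (indicator {\<alpha>}) \<notin> mpinf p w}"
proof (rule countable_if_countable_levels
    [of _ "\<lambda>\<epsilon> \<alpha>. infinite {m. ennreal \<epsilon> \<le> dyadic_level p w (T (indicator {\<alpha>})) m}"])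
  fix \<alpha> assume "\<alpha> \<in> {\<alpha>. T (indicator {\<alpha>}) \<notin> mpinf p w}"
  show "\<exists>\<epsilon>>0. infinite {m. ennreal \<epsilon> \<le> dyadic_level p w (T (indicator {\<alpha>})) m}"
  proof (rule ccontr)
    assume "\<not> (\<exists>\<epsilon>>0. infinite {m. ennreal \<epsilon> \<le> dyadic_level p w (T (indicator {\<alpha>})) m})"
    hence "T (indicator {\<alpha>}) \<in> mpinf p w"
      using p by (intro mpinf_if_finitely_many_large_levels[OF _ T_indicator_lpinf]) auto
    thus False using \<open>\<alpha> \<in> {\<alpha>. T (indicator {\<alpha>}) \<notin> mpinf p w}\<close> by simp
  qed
next
  fix \<epsilon> \<epsilon>' :: real and \<alpha>
  assume "\<epsilon> \<le> \<epsilon>'" and inf: "infinite {m. ennreal \<epsilon>' \<le> dyadic_level p w (T (indicator {\<alpha>})) m}"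
  show "infinite {m. ennreal \<epsilon> \<le> dyadic_level p w (T (indicator {\<alpha>})) m}"
    using inf by (rule infinite_super[rotated]) (auto intro: order_trans[OF ennreal_leI[OF \<open>\<epsilon> \<le> \<epsilon>'\<close>]])
next
  fix \<epsilon> :: real assume "0 < \<epsilon>"
  let ?U = "{\<alpha> \<in> {\<alpha>. T (indicator {\<alpha>}) \<notin> mpinf p w}.
    infinite {m. ennreal \<epsilon> \<le> dyadic_level p w (T (indicator {\<alpha>})) m}}"
  show "countable ?U"
  proof (rule ccontr)
    assume "uncountable ?U"
    hence "infinite {m. uncountable {\<alpha> \<in> ?U. ennreal \<epsilon> \<le> dyadic_level p w (T (indicator {\<alpha>})) m}}"
      by (rule infinite_uncountable_sections) simp
    moreover have "{m. uncountable {\<alpha> \<in> ?U. ennreal \<epsilon> \<le> dyadic_level p w (T (indicator {\<alpha>})) m}}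
        \<subseteq> {m. uncountable {\<alpha>. ennreal \<epsilon> \<le> dyadic_level p w (T (indicator {\<alpha>})) m}}"
    proof (intro subsetI CollectI notI)
      fix m assume "m \<in> {m. uncountable {\<alpha> \<in> ?U. ennreal \<epsilon> \<le> dyadic_level p w (T (indicator {\<alpha>})) m}}"
        and "countable {\<alpha>. ennreal \<epsilon> \<le> dyadic_level p w (T (indicator {\<alpha>})) m}"
      moreover have "{\<alpha> \<in> ?U. ennreal \<epsilon> \<le> dyadic_level p w (T (indicator {\<alpha>})) m}
          \<subseteq> {\<alpha>. ennreal \<epsilon> \<le> dyadic_level p w (T (indicator {\<alpha>})) m}" by blast
      ultimately show False using countable_subset by auto
    qed
    ultimately show False
      using finite_subset[OF _ finite_uncountable_dyadic_levels[OF \<open>0 < \<epsilon>\<close>]] by blast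
  qed
qed

end

theorem proposition10:
  fixes p :: real
    and w :: "'g \<Rightarrow> real"
    and T :: "('a \<Rightarrow> real) \<Rightarrow> ('g \<Rightarrow> real)"
  assumes "1 < p"
    and "\<forall>x. 0 < w x"
    and "bounded_linear_wk p (\<lambda>_. 1) (mpinf p (\<lambda>_. 1)) w T"
  shows "countable {\<alpha>. T (indicator {\<alpha>}) \<notin> mpinf p w}"
  by (rule countable_not_mpinf[OF assms])

end
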